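(* Let $\mathbb{F}$ be an infinite field with $\operatorname{char}(\mathbb{F})\neq 2$ and let $G$ be a non-abelian group with a group involution $\ast$ and a non-trivial orientation $\sigma:G\to\{\pm1\}$ such that $gg^\ast\in N=\ker\sigma$ for all $g\in G$. Suppose $\mathbb{F}G$ is normal with respect to the oriented involution $\circledast$ and that $N$, with the restriction of $\ast$, is an SLC-group with unique non-identity commutator $s$. Then $G$ is an LC-group and $\ast$ is given by $g^\ast=g$ if $g\in N\cap\zeta(G)$ or $g\in(G\setminus N)\setminus\zeta(G)$, and $g^\ast=sg$ otherwise.
   Context: A group involution on $G$ is a map $\ast:G\to G$ with $(gh)^\ast=h^\ast g^\ast$ and $(g^\ast)^\ast=g$. An orientation is a group homomorphism $\sigma:G\to\{\pm1\}$. The oriented involution is $(\sum_g\alpha_g g)^\circledast=\sum_g\alpha_g\sigma(g)g^\ast$ on $\mathbb{F}G$. $\mathbb{F}G$ is normal if $\alpha\alpha^\circledast=\alpha^\circledast\alpha$ for all $\alpha\in\mathbb{F}G$. $\zeta(G)$ is the center of $G$, $(g,h)=g^{-1}h^{-1}gh$. A group $H$ is an LC-group if it is non-abelian and for all $g,h\in H$: $gh=hg$ iff at least one of $g,h,gh$ is in $\zeta(H)$. $H$ with involution $\ast$ is an SLC-group if it is an LC-group with a unique non-identity commutator $s$ (i.e. $\{(g,h):g,h\in H\}=\{1,s\}$) and $h^\ast=h$ for $h\in\zeta(H)$, $h^\ast=sh$ for $h\notin\zeta(H)$. *)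

theory Defs
  imports "HOL-Algebra.Group"
begin

definition group_involution :: "('g, 'b) monoid_scheme \<Rightarrow> ('g \<Rightarrow> 'g) \<Rightarrow> bool" where
  "group_involution G iv \<longleftrightarrow>
     (\<forall>g\<in>carrier G. iv g \<in> carrier G) \<and>
     (\<forall>g\<in>carrier G. \<forall>h\<in>carrier G. iv (g \<otimes>\<^bsub>G\<^esub> h) = iv h \<otimes>\<^bsub>G\<^esub> iv g) \<and>
     (\<forall>g\<in>carrier G. iv (iv g) = g)"

definition orientation :: "('g, 'b) monoid_scheme \<Rightarrow> ('g \<Rightarrow> int) \<Rightarrow> bool" where
  "orientation G \<sigma> \<longleftrightarrow>
     (\<forall>g\<in>carrier G. \<sigma> g = 1 \<or> \<sigma> g = -1) \<and>
     (\<forall>g\<in>carrier G. \<forall>h\<in>carrier G. \<sigma> (g \<otimes>\<^bsub>G\<^esub> h) = \<sigma> g * \<sigma> h)"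

definition orient_kernel :: "('g, 'b) monoid_scheme \<Rightarrow> ('g \<Rightarrow> int) \<Rightarrow> 'g set" where
  "orient_kernel G \<sigma> = {g \<in> carrier G. \<sigma> g = 1}"

definition grp_center :: "('g, 'b) monoid_scheme \<Rightarrow> 'g set" where
  "grp_center G = {g \<in> carrier G. \<forall>h\<in>carrier G. g \<otimes>\<^bsub>G\<^esub> h = h \<otimes>\<^bsub>G\<^esub> g}"

definition grp_comm :: "('g, 'b) monoid_scheme \<Rightarrow> 'g \<Rightarrow> 'g \<Rightarrow> 'g" where
  "grp_comm G g h = inv\<^bsub>G\<^esub> g \<otimes>\<^bsub>G\<^esub> inv\<^bsub>G\<^esub> h \<otimes>\<^bsub>G\<^esub> g \<otimes>\<^bsub>G\<^esub> h"

definition non_abelian :: "('g, 'b) monoid_scheme \<Rightarrow> bool" where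
  "non_abelian G \<longleftrightarrow> (\<exists>g\<in>carrier G. \<exists>h\<in>carrier G. g \<otimes>\<^bsub>G\<^esub> h \<noteq> h \<otimes>\<^bsub>G\<^esub> g)"

definition LC_group :: "('g, 'b) monoid_scheme \<Rightarrow> bool" where
  "LC_group H \<longleftrightarrow> non_abelian H \<and>
     (\<forall>g\<in>carrier H. \<forall>h\<in>carrier H.
        g \<otimes>\<^bsub>H\<^esub> h = h \<otimes>\<^bsub>H\<^esub> g \<longleftrightarrow>
        (g \<in> grp_center H \<or> h \<in> grp_center H \<or> g \<otimes>\<^bsub>H\<^esub> h \<in> grp_center H))"

definition SLC_group :: "('g, 'b) monoid_scheme \<Rightarrow> ('g \<Rightarrow> 'g) \<Rightarrow> 'g \<Rightarrow> bool" where
  "SLC_group H star s \<longleftrightarrow>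
     group_involution H star \<and> LC_group H \<and> s \<noteq> \<one>\<^bsub>H\<^esub> \<and>
     {grp_comm H g h | g h. g \<in> carrier H \<and> h \<in> carrier H} = {\<one>\<^bsub>H\<^esub>, s} \<and>
     (\<forall>h\<in>carrier H. star h = (if h \<in> grp_center H then h else s \<otimes>\<^bsub>H\<^esub> h))"

definition grp_alg :: "('g, 'b) monoid_scheme \<Rightarrow> ('g \<Rightarrow> 'f::field) set" where
  "grp_alg G = {a. finite {g. a g \<noteq> 0} \<and> (\<forall>g. g \<notin> carrier G \<longrightarrow> a g = 0)}"

definition grp_alg_mult :: "('g, 'b) monoid_scheme \<Rightarrow> ('g \<Rightarrow> 'f::field) \<Rightarrow> ('g \<Rightarrow> 'f) \<Rightarrow> 'g \<Rightarrow> 'f" where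
  "grp_alg_mult G a b = (\<lambda>x. if x \<in> carrier G
      then (\<Sum>g\<in>{g. a g \<noteq> 0}. a g * b (inv\<^bsub>G\<^esub> g \<otimes>\<^bsub>G\<^esub> x)) else 0)"

text \<open>Oriented involution: (sum a_g g) \<mapsto> sum a_g \<sigma>(g) g*; the coefficient at x is a_(x*) \<sigma>(x*).\<close>
definition oriented_inv :: "('g, 'b) monoid_scheme \<Rightarrow> ('g \<Rightarrow> int) \<Rightarrow> ('g \<Rightarrow> 'g) \<Rightarrow> ('g \<Rightarrow> 'f::field) \<Rightarrow> 'g \<Rightarrow> 'f" where
  "oriented_inv G \<sigma> star a = (\<lambda>x. if x \<in> carrier G then of_int (\<sigma> (star x)) * a (star x) else 0)"

definition grp_alg_normal :: "'f::field itself \<Rightarrow> ('g, 'b) monoid_scheme \<Rightarrow> ('g \<Rightarrow> int) \<Rightarrow> ('g \<Rightarrow> 'g) \<Rightarrow> bool" where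
  "grp_alg_normal TYPE('f) G \<sigma> star \<longleftrightarrow>
     (\<forall>a \<in> (grp_alg G :: ('g \<Rightarrow> 'f) set).
        grp_alg_mult G a (oriented_inv G \<sigma> star a) = grp_alg_mult G (oriented_inv G \<sigma> star a) a)"

end

theory Submission
  imports Defs
begin

text \<open>Normality applied to the elements g and g + h of FG, compared coefficientwise, gives
  g g* = g* g and, for g \<noteq> h, the identity
  \<sigma>(h) g h* + \<sigma>(g) h g* = \<sigma>(g) g* h + \<sigma>(h) h* g of formal sums. As char F \<noteq> 2, the two sides
  must agree term by term, which leaves two alternatives for every pair g, h.
  The SLC structure of N = ker \<sigma> makes s, the only non-trivial commutator in N, a central
  involution of G. Playing the pair alternatives off against suitable elements of N and of
  G - N shows that the centre of N is N \<inter> \<zeta>(G), and that t* = st for central t \<notin> N and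
  t* = t for non-central t \<notin> N. With this formula for *, if g and h commute but none of g, h, gh
  is central, then comparing (gh)* with h* g* gives gh = s gh; hence G is an LC-group.
  The field need not be infinite.\<close>

lemma pair_sums_eq_same_sign:
  fixes q :: "'f::field" and a b c d :: 'g
  assumes "(2::'f) \<noteq> 0" and "q \<noteq> 0"
    and "\<forall>x\<in>{a,b,c,d}. (if x = a then q else 0) + (if x = b then q else 0)
       = (if x = c then q else 0) + (if x = d then q else 0)"
  shows "(a = c \<and> b = d) \<or> (a = d \<and> b = c)"
proof -
  have "q + q \<noteq> 0" using assms(1,2) by (metis mult_2 mult_eq_0_iff)
  then show ?thesis using assms(2,3)
    by (cases "a = b"; cases "a = c"; cases "a = d"; cases "b = c"; cases "b = d"; cases "c = d"; simp)
qed

lemma pair_sums_eq_opposite_sign: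
  fixes q :: "'f::field" and a b c d :: 'g
  assumes "(2::'f) \<noteq> 0" and "q \<noteq> 0"
    and "\<forall>x\<in>{a,b,c,d}. (if x = a then q else 0) + (if x = b then -q else 0)
       = (if x = c then -q else 0) + (if x = d then q else 0)"
  shows "(a = b \<and> c = d) \<or> (a = d \<and> c = b)"
proof -
  have "q + q \<noteq> 0" using assms(1,2) by (metis mult_2 mult_eq_0_iff)
  moreover from this have "q \<noteq> -q" by (metis add_eq_0_iff)
  ultimately show ?thesis using assms(2,3)
    by (cases "a = b"; cases "a = c"; cases "a = d"; cases "b = c"; cases "b = d"; cases "c = d"; simp)
qed

lemma (in group) m_inv_cancel_left [simp]: "x \<in> carrier G \<Longrightarrow> y \<in> carrier G \<Longrightarrow> x \<otimes> (inv x \<otimes> y) = y"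
  by (simp add: m_assoc [symmetric])

lemma (in group) inv_m_cancel_left [simp]: "x \<in> carrier G \<Longrightarrow> y \<in> carrier G \<Longrightarrow> inv x \<otimes> (x \<otimes> y) = y"
  by (simp add: m_assoc [symmetric])

lemma (in group) grp_center_closed: "z \<in> grp_center G \<Longrightarrow> z \<in> carrier G"
  unfolding grp_center_def by auto

lemma (in group) grp_center_commute: "z \<in> grp_center G \<Longrightarrow> x \<in> carrier G \<Longrightarrow> x \<otimes> z = z \<otimes> x"
  unfolding grp_center_def by auto

lemma (in group) not_in_grp_center:
  "m \<in> carrier G \<Longrightarrow> n \<in> carrier G \<Longrightarrow> m \<otimes> n \<noteq> n \<otimes> m \<Longrightarrow> m \<notin> grp_center G"
  unfolding grp_center_def by auto

lemma (in group) group_involution_center: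
  assumes inv: "group_involution G star" and z: "z \<in> grp_center G"
  shows "star z \<in> grp_center G"
proof -
  have zc: "z \<in> carrier G" using z by (rule grp_center_closed)
  have closed: "\<And>g. g \<in> carrier G \<Longrightarrow> star g \<in> carrier G"
    and invol: "\<And>g. g \<in> carrier G \<Longrightarrow> star (star g) = g"
    and anti: "\<And>g h. g \<in> carrier G \<Longrightarrow> h \<in> carrier G \<Longrightarrow> star (g \<otimes> h) = star h \<otimes> star g"
    using inv unfolding group_involution_def by auto
  have "star z \<otimes> h = h \<otimes> star z" if h: "h \<in> carrier G" for h
  proof -
    have "star z \<otimes> h = star (star h \<otimes> z)" using h zc by (simp add: anti closed invol)
    also have "\<dots> = star (z \<otimes> star h)" using z h closed grp_center_commute by auto
    also have "\<dots> = h \<otimes> star z" using h zc by (simp add: anti closed invol)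
    finally show ?thesis .
  qed
  then show ?thesis unfolding grp_center_def using zc closed by auto
qed

lemma (in group) grp_comm_closed [simp]:
  "g \<in> carrier G \<Longrightarrow> h \<in> carrier G \<Longrightarrow> grp_comm G g h \<in> carrier G"
  unfolding grp_comm_def by simp

lemma (in group) commutator_mult:
  "g \<in> carrier G \<Longrightarrow> h \<in> carrier G \<Longrightarrow> h \<otimes> g \<otimes> grp_comm G g h = g \<otimes> h"
  unfolding grp_comm_def by (simp add: m_assoc)

lemma (in group) grp_comm_eq_one_iff:
  assumes "g \<in> carrier G" "h \<in> carrier G"
  shows "grp_comm G g h = \<one> \<longleftrightarrow> g \<otimes> h = h \<otimes> g"
  using commutator_mult[OF assms] assms by (metis grp_comm_closed l_cancel_one m_closed r_one)

lemma (in group) inv_grp_comm: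
  "g \<in> carrier G \<Longrightarrow> h \<in> carrier G \<Longrightarrow> inv (grp_comm G g h) = grp_comm G h g"
  unfolding grp_comm_def by (simp add: inv_mult_group m_assoc)

lemma (in group) conj_grp_comm:
  assumes "x \<in> carrier G" "g \<in> carrier G" "h \<in> carrier G"
  shows "inv x \<otimes> grp_comm G g h \<otimes> x = grp_comm G (inv x \<otimes> g \<otimes> x) (inv x \<otimes> h \<otimes> x)"
  using assms unfolding grp_comm_def by (simp add: inv_mult_group m_assoc)

section \<open>Consequences of normality of FG\<close>

definition grp_alg_of_set :: "'g set \<Rightarrow> 'g \<Rightarrow> 'f::field" where
  "grp_alg_of_set S = (\<lambda>z. if z \<in> S then 1 else 0)"

lemma grp_alg_of_set_in_grp_alg:
  "finite S \<Longrightarrow> S \<subseteq> carrier G \<Longrightarrow> grp_alg_of_set S \<in> grp_alg G"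
  unfolding grp_alg_def grp_alg_of_set_def by auto

lemma (in group) grp_alg_mult_of_set_oriented_inv:
  assumes inv: "group_involution G star" and S: "finite S" "S \<subseteq> carrier G" and x: "x \<in> carrier G"
  shows "grp_alg_mult G (grp_alg_of_set S) (oriented_inv G \<sigma> star (grp_alg_of_set S)) x
       = (\<Sum>y\<in>S. \<Sum>w\<in>S. if x = y \<otimes> star w then (of_int (\<sigma> w) :: 'f::field) else 0)"
proof -
  have closed: "\<And>g. g \<in> carrier G \<Longrightarrow> star g \<in> carrier G"
    and invol: "\<And>g. g \<in> carrier G \<Longrightarrow> star (star g) = g"
    using inv unfolding group_involution_def by auto
  have supp: "{z. (grp_alg_of_set S z :: 'f) \<noteq> 0} = S" by (simp add: grp_alg_of_set_def)
  have "(\<Sum>w\<in>S. if x = y \<otimes> star w then (of_int (\<sigma> w) :: 'f) else 0)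
      = oriented_inv G \<sigma> star (grp_alg_of_set S) (inv y \<otimes> x)" if y: "y \<in> S" for y
  proof -
    have yc: "y \<in> carrier G" using y S by auto
    have "x = y \<otimes> star w \<longleftrightarrow> w = star (inv y \<otimes> x)" if "w \<in> S" for w
    proof -
      have wc: "w \<in> carrier G" using that S by auto
      have "x = y \<otimes> star w \<longleftrightarrow> star w = inv y \<otimes> x"
        using yc wc x closed by (metis inv_solve_left)
      also have "\<dots> \<longleftrightarrow> w = star (inv y \<otimes> x)" using invol closed wc yc x by (metis inv_closed m_closed)
      finally show ?thesis .
    qed
    then have "(\<Sum>w\<in>S. if x = y \<otimes> star w then (of_int (\<sigma> w) :: 'f) else 0)
        = (\<Sum>w\<in>S. if w = star (inv y \<otimes> x) then of_int (\<sigma> w) else 0)"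
      by (intro sum.cong) auto
    also have "\<dots> = oriented_inv G \<sigma> star (grp_alg_of_set S) (inv y \<otimes> x)"
      using S yc x by (simp add: sum.delta' oriented_inv_def grp_alg_of_set_def)
    finally show ?thesis .
  qed
  then show ?thesis
    unfolding grp_alg_mult_def supp using x by (simp add: grp_alg_of_set_def)
qed

lemma (in group) grp_alg_mult_oriented_inv_of_set:
  assumes inv: "group_involution G star" and ori: "orientation G \<sigma>"
    and S: "finite S" "S \<subseteq> carrier G" and x: "x \<in> carrier G"
  shows "grp_alg_mult G (oriented_inv G \<sigma> star (grp_alg_of_set S)) (grp_alg_of_set S) x
       = (\<Sum>y\<in>S. \<Sum>w\<in>S. if x = star y \<otimes> w then (of_int (\<sigma> y) :: 'f::field) else 0)"
proof -
  have closed: "\<And>g. g \<in> carrier G \<Longrightarrow> star g \<in> carrier G"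
    and invol: "\<And>g. g \<in> carrier G \<Longrightarrow> star (star g) = g"
    using inv unfolding group_involution_def by auto
  have nonzero: "\<And>g. g \<in> carrier G \<Longrightarrow> (of_int (\<sigma> g) :: 'f) \<noteq> 0"
    using ori unfolding orientation_def by force
  let ?\<beta> = "oriented_inv G \<sigma> star (grp_alg_of_set S) :: _ \<Rightarrow> 'f"
  have supp: "{z. ?\<beta> z \<noteq> 0} = star ` S"
  proof
    show "{z. ?\<beta> z \<noteq> 0} \<subseteq> star ` S"
      using invol by (force simp: oriented_inv_def grp_alg_of_set_def split: if_splits)
    show "star ` S \<subseteq> {z. ?\<beta> z \<noteq> 0}"
      using S by (auto simp: oriented_inv_def grp_alg_of_set_def invol closed nonzero)
  qed
  have inj: "inj_on star S" using invol S by (metis inj_on_def subsetD)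
  have "(\<Sum>w\<in>S. if x = star y \<otimes> w then (of_int (\<sigma> y) :: 'f) else 0)
      = ?\<beta> (star y) * grp_alg_of_set S (inv (star y) \<otimes> x)" if y: "y \<in> S" for y
  proof -
    have yc: "y \<in> carrier G" using y S by auto
    have "(\<Sum>w\<in>S. if x = star y \<otimes> w then (of_int (\<sigma> y) :: 'f) else 0)
        = (\<Sum>w\<in>S. if w = inv (star y) \<otimes> x then of_int (\<sigma> y) else 0)"
      using S yc x closed by (intro sum.cong refl) (metis inv_solve_left subsetD)
    also have "\<dots> = ?\<beta> (star y) * grp_alg_of_set S (inv (star y) \<otimes> x)"
      using S y yc x closed invol by (simp add: sum.delta' oriented_inv_def grp_alg_of_set_def)
    finally show ?thesis .
  qed
  then show ?thesis
    unfolding grp_alg_mult_def supp using x by (simp add: sum.reindex[OF inj])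
qed

lemma (in group) grp_alg_normal_coeffs:
  assumes inv: "group_involution G star" and ori: "orientation G \<sigma>"
    and normal: "grp_alg_normal TYPE('f::field) G \<sigma> star"
    and S: "finite S" "S \<subseteq> carrier G" and x: "x \<in> carrier G"
  shows "(\<Sum>y\<in>S. \<Sum>w\<in>S. if x = y \<otimes> star w then (of_int (\<sigma> w) :: 'f) else 0)
       = (\<Sum>y\<in>S. \<Sum>w\<in>S. if x = star y \<otimes> w then of_int (\<sigma> y) else 0)"
proof -
  have "(grp_alg_of_set S :: 'a \<Rightarrow> 'f) \<in> grp_alg G" using S by (rule grp_alg_of_set_in_grp_alg)
  then have "grp_alg_mult G (grp_alg_of_set S) (oriented_inv G \<sigma> star (grp_alg_of_set S)) x
      = grp_alg_mult G (oriented_inv G \<sigma> star (grp_alg_of_set S)) (grp_alg_of_set S :: 'a \<Rightarrow> 'f) x"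
    using normal unfolding grp_alg_normal_def by simp
  then show ?thesis
    by (simp only: grp_alg_mult_of_set_oriented_inv[OF inv S x] grp_alg_mult_oriented_inv_of_set[OF inv ori S x])
qed

lemma (in group) grp_alg_normal_star_commute:
  assumes inv: "group_involution G star" and ori: "orientation G \<sigma>"
    and normal: "grp_alg_normal TYPE('f::field) G \<sigma> star" and g: "g \<in> carrier G"
  shows "g \<otimes> star g = star g \<otimes> g"
proof -
  have "star g \<in> carrier G" using inv g unfolding group_involution_def by auto
  then have "(\<Sum>y\<in>{g}. \<Sum>w\<in>{g}. if g \<otimes> star g = y \<otimes> star w then (of_int (\<sigma> w) :: 'f) else 0)
      = (\<Sum>y\<in>{g}. \<Sum>w\<in>{g}. if g \<otimes> star g = star y \<otimes> w then of_int (\<sigma> y) else 0)"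
    using g by (intro grp_alg_normal_coeffs[OF inv ori normal]) auto
  moreover have "(of_int (\<sigma> g) :: 'f) \<noteq> 0" using ori g unfolding orientation_def by force
  ultimately show ?thesis by (simp split: if_splits)
qed

lemma (in group) grp_alg_normal_pair_coeffs:
  assumes inv: "group_involution G star" and ori: "orientation G \<sigma>"
    and normal: "grp_alg_normal TYPE('f::field) G \<sigma> star"
    and g: "g \<in> carrier G" and h: "h \<in> carrier G" and "g \<noteq> h" and x: "x \<in> carrier G"
  shows "(if x = g \<otimes> star h then (of_int (\<sigma> h) :: 'f) else 0) + (if x = h \<otimes> star g then of_int (\<sigma> g) else 0)
       = (if x = star g \<otimes> h then of_int (\<sigma> g) else 0) + (if x = star h \<otimes> g then of_int (\<sigma> h) else 0)"
proof -
  have "(\<Sum>y\<in>{g,h}. \<Sum>w\<in>{g,h}. if x = y \<otimes> star w then (of_int (\<sigma> w) :: 'f) else 0)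
      = (\<Sum>y\<in>{g,h}. \<Sum>w\<in>{g,h}. if x = star y \<otimes> w then of_int (\<sigma> y) else 0)"
    using g h x by (intro grp_alg_normal_coeffs[OF inv ori normal]) auto
  then show ?thesis
    using \<open>g \<noteq> h\<close>
    by (simp add: grp_alg_normal_star_commute[OF inv ori normal g]
        grp_alg_normal_star_commute[OF inv ori normal h] algebra_simps)
qed

lemma (in group) grp_alg_normal_same_sign:
  assumes inv: "group_involution G star" and ori: "orientation G \<sigma>"
    and normal: "grp_alg_normal TYPE('f::field) G \<sigma> star" and two: "(2::'f) \<noteq> 0"
    and g: "g \<in> carrier G" and h: "h \<in> carrier G" and "g \<noteq> h" and "\<sigma> g = \<sigma> h"
  shows "(g \<otimes> star h = star g \<otimes> h \<and> h \<otimes> star g = star h \<otimes> g)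
       \<or> (g \<otimes> star h = star h \<otimes> g \<and> h \<otimes> star g = star g \<otimes> h)"
proof (rule pair_sums_eq_same_sign[OF two])
  show "(of_int (\<sigma> g) :: 'f) \<noteq> 0" using ori g unfolding orientation_def by force
  have "star g \<in> carrier G" "star h \<in> carrier G" using inv g h unfolding group_involution_def by auto
  show "\<forall>x\<in>{g \<otimes> star h, h \<otimes> star g, star g \<otimes> h, star h \<otimes> g}.
      (if x = g \<otimes> star h then (of_int (\<sigma> g) :: 'f) else 0) + (if x = h \<otimes> star g then of_int (\<sigma> g) else 0)
    = (if x = star g \<otimes> h then of_int (\<sigma> g) else 0) + (if x = star h \<otimes> g then of_int (\<sigma> g) else 0)"
  proof
    fix x assume "x \<in> {g \<otimes> star h, h \<otimes> star g, star g \<otimes> h, star h \<otimes> g}"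
    then have "x \<in> carrier G" using g h \<open>star g \<in> carrier G\<close> \<open>star h \<in> carrier G\<close> by auto
    from grp_alg_normal_pair_coeffs[OF inv ori normal g h \<open>g \<noteq> h\<close> this]
    show "(if x = g \<otimes> star h then (of_int (\<sigma> g) :: 'f) else 0) + (if x = h \<otimes> star g then of_int (\<sigma> g) else 0)
        = (if x = star g \<otimes> h then of_int (\<sigma> g) else 0) + (if x = star h \<otimes> g then of_int (\<sigma> g) else 0)"
      by (simp only: \<open>\<sigma> g = \<sigma> h\<close>)
  qed
qed

lemma (in group) grp_alg_normal_opposite_sign:
  assumes inv: "group_involution G star" and ori: "orientation G \<sigma>"
    and normal: "grp_alg_normal TYPE('f::field) G \<sigma> star" and two: "(2::'f) \<noteq> 0"
    and g: "g \<in> carrier G" and h: "h \<in> carrier G" and "\<sigma> g \<noteq> \<sigma> h"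
  shows "(g \<otimes> star h = h \<otimes> star g \<and> star g \<otimes> h = star h \<otimes> g)
       \<or> (g \<otimes> star h = star h \<otimes> g \<and> star g \<otimes> h = h \<otimes> star g)"
proof (rule pair_sums_eq_opposite_sign[OF two])
  have "\<sigma> g = 1 \<or> \<sigma> g = -1" "\<sigma> h = 1 \<or> \<sigma> h = -1" using ori g h unfolding orientation_def by auto
  then have sign: "\<sigma> g = - \<sigma> h" using \<open>\<sigma> g \<noteq> \<sigma> h\<close> by auto
  show "(of_int (\<sigma> h) :: 'f) \<noteq> 0" using ori h unfolding orientation_def by force
  have "star g \<in> carrier G" "star h \<in> carrier G" using inv g h unfolding group_involution_def by auto
  show "\<forall>x\<in>{g \<otimes> star h, h \<otimes> star g, star g \<otimes> h, star h \<otimes> g}.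
      (if x = g \<otimes> star h then (of_int (\<sigma> h) :: 'f) else 0) + (if x = h \<otimes> star g then - of_int (\<sigma> h) else 0)
    = (if x = star g \<otimes> h then - of_int (\<sigma> h) else 0) + (if x = star h \<otimes> g then of_int (\<sigma> h) else 0)"
  proof
    fix x assume "x \<in> {g \<otimes> star h, h \<otimes> star g, star g \<otimes> h, star h \<otimes> g}"
    then have "x \<in> carrier G" using g h \<open>star g \<in> carrier G\<close> \<open>star h \<in> carrier G\<close> by auto
    moreover have "g \<noteq> h" using \<open>\<sigma> g \<noteq> \<sigma> h\<close> by auto
    ultimately have "(if x = g \<otimes> star h then (of_int (\<sigma> h) :: 'f) else 0) + (if x = h \<otimes> star g then of_int (\<sigma> g) else 0)
        = (if x = star g \<otimes> h then of_int (\<sigma> g) else 0) + (if x = star h \<otimes> g then of_int (\<sigma> h) else 0)"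
      using grp_alg_normal_pair_coeffs[OF inv ori normal g h] by blast
    then show "(if x = g \<otimes> star h then (of_int (\<sigma> h) :: 'f) else 0) + (if x = h \<otimes> star g then - of_int (\<sigma> h) else 0)
        = (if x = star g \<otimes> h then - of_int (\<sigma> h) else 0) + (if x = star h \<otimes> g then of_int (\<sigma> h) else 0)"
      by (simp only: sign of_int_minus)
  qed
qed

section \<open>Oriented involutions with an SLC kernel\<close>

text \<open>Normality of FG enters only through the last three assumptions.\<close>

locale normal_SLC_kernel = group G for G (structure) +
  fixes star :: "'a \<Rightarrow> 'a" and \<sigma> :: "'a \<Rightarrow> int" and s :: 'a
  assumes involution: "group_involution G star"
    and orientation: "orientation G \<sigma>"
    and orientation_nontrivial: "\<exists>t\<in>carrier G. \<sigma> t = -1"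
    and sigma_star: "g \<in> carrier G \<Longrightarrow> \<sigma> (star g) = \<sigma> g"
    and SLC_kernel: "SLC_group (G\<lparr>carrier := orient_kernel G \<sigma>\<rparr>) star s"
    and star_commute: "g \<in> carrier G \<Longrightarrow> g \<otimes> star g = star g \<otimes> g"
    and same_sign: "\<lbrakk>g \<in> carrier G; h \<in> carrier G; g \<noteq> h; \<sigma> g = \<sigma> h\<rbrakk> \<Longrightarrow>
      (g \<otimes> star h = star g \<otimes> h \<and> h \<otimes> star g = star h \<otimes> g)
      \<or> (g \<otimes> star h = star h \<otimes> g \<and> h \<otimes> star g = star g \<otimes> h)"
    and opposite_sign: "\<lbrakk>g \<in> carrier G; h \<in> carrier G; \<sigma> g \<noteq> \<sigma> h\<rbrakk> \<Longrightarrow>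
      (g \<otimes> star h = h \<otimes> star g \<and> star g \<otimes> h = star h \<otimes> g)
      \<or> (g \<otimes> star h = star h \<otimes> g \<and> star g \<otimes> h = h \<otimes> star g)"
begin

abbreviation "N \<equiv> orient_kernel G \<sigma>"
abbreviation "H \<equiv> G\<lparr>carrier := N\<rparr>"
abbreviation "Z \<equiv> grp_center G"

lemma star_closed [simp]: "g \<in> carrier G \<Longrightarrow> star g \<in> carrier G"
  using involution unfolding group_involution_def by auto

lemma star_star [simp]: "g \<in> carrier G \<Longrightarrow> star (star g) = g"
  using involution unfolding group_involution_def by auto

lemma star_mult: "g \<in> carrier G \<Longrightarrow> h \<in> carrier G \<Longrightarrow> star (g \<otimes> h) = star h \<otimes> star g"
  using involution unfolding group_involution_def by auto

lemma sigma_cases: "g \<in> carrier G \<Longrightarrow> \<sigma> g = 1 \<or> \<sigma> g = -1"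
  using orientation unfolding orientation_def by auto

lemma sigma_mult: "g \<in> carrier G \<Longrightarrow> h \<in> carrier G \<Longrightarrow> \<sigma> (g \<otimes> h) = \<sigma> g * \<sigma> h"
  using orientation unfolding orientation_def by auto

lemma sigma_one: "\<sigma> \<one> = 1"
  using sigma_mult[of \<one> \<one>] sigma_cases[of \<one>] by auto

lemma sigma_inv: "g \<in> carrier G \<Longrightarrow> \<sigma> (inv g) = \<sigma> g"
  using sigma_mult[of g "inv g"] sigma_cases[of g] sigma_cases[of "inv g"] sigma_one by auto

lemma kernel_iff: "g \<in> N \<longleftrightarrow> g \<in> carrier G \<and> \<sigma> g = 1"
  unfolding orient_kernel_def by auto

lemma not_in_kernel_iff: "g \<in> carrier G \<Longrightarrow> g \<notin> N \<longleftrightarrow> \<sigma> g = -1"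
  using sigma_cases[of g] kernel_iff by auto

lemma kernel_closed [simp]: "g \<in> N \<Longrightarrow> g \<in> carrier G"
  using kernel_iff by auto

lemma kernel_mult_iff: "g \<in> carrier G \<Longrightarrow> h \<in> carrier G \<Longrightarrow> g \<otimes> h \<in> N \<longleftrightarrow> (g \<in> N \<longleftrightarrow> h \<in> N)"
  using sigma_cases[of g] sigma_cases[of h] by (auto simp: kernel_iff sigma_mult)

lemma kernel_subgroup: "subgroup N G"
proof (rule subgroupI)
  show "N \<noteq> {}" using sigma_one kernel_iff by auto
qed (auto simp: kernel_iff sigma_mult sigma_inv)

lemma kernel_conj_closed: "g \<in> N \<Longrightarrow> x \<in> carrier G \<Longrightarrow> inv x \<otimes> g \<otimes> x \<in> N"
  using sigma_cases[of x] by (auto simp: kernel_iff sigma_mult sigma_inv)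

lemma s_neq_one: "s \<noteq> \<one>"
  using SLC_kernel unfolding SLC_group_def by auto

lemma star_kernel_SLC: "n \<in> N \<Longrightarrow> star n = (if n \<in> grp_center H then n else s \<otimes> n)"
  using SLC_kernel unfolding SLC_group_def by auto

lemma kernel_commutators: "{grp_comm G g h | g h. g \<in> N \<and> h \<in> N} = {\<one>, s}"
proof -
  have "grp_comm H g h = grp_comm G g h" if "g \<in> N" "h \<in> N" for g h
    using that kernel_subgroup by (simp add: grp_comm_def m_inv_consistent)
  then have "{grp_comm G g h | g h. g \<in> N \<and> h \<in> N} = {grp_comm H g h | g h. g \<in> N \<and> h \<in> N}"
    by metis
  with SLC_kernel show ?thesis unfolding SLC_group_def by simp
qed

lemma kernel_comm_cases: "g \<in> N \<Longrightarrow> h \<in> N \<Longrightarrow> grp_comm G g h = \<one> \<or> grp_comm G g h = s"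
  using kernel_commutators by blast

lemma s_kernel_comm:
  obtains g h where "g \<in> N" "h \<in> N" "s = grp_comm G g h"
  using kernel_commutators by blast

lemma s_in_kernel: "s \<in> N"
proof -
  obtain g h where "g \<in> N" "h \<in> N" "s = grp_comm G g h" by (rule s_kernel_comm)
  then show ?thesis
    using kernel_subgroup by (simp add: grp_comm_def subgroup.m_closed subgroup.m_inv_closed)
qed

lemma s_closed [simp]: "s \<in> carrier G"
  using s_in_kernel by simp

lemma s_square: "s \<otimes> s = \<one>"
proof -
  obtain g h where gh: "g \<in> N" "h \<in> N" and s: "s = grp_comm G g h" by (rule s_kernel_comm)
  have "inv s = grp_comm G h g" using gh s by (simp add: inv_grp_comm)
  then have "inv s = \<one> \<or> inv s = s" using kernel_comm_cases[of h g] gh by auto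
  then have "inv s = s" using s_neq_one by (metis inv_inv one_closed s_closed inv_one)
  then show ?thesis by (metis r_inv s_closed)
qed

lemma s_center: "s \<in> Z"
proof -
  obtain g h where gh: "g \<in> N" "h \<in> N" and s: "s = grp_comm G g h" by (rule s_kernel_comm)
  have "x \<otimes> s = s \<otimes> x" if x: "x \<in> carrier G" for x
  proof -
    have "inv x \<otimes> s \<otimes> x = grp_comm G (inv x \<otimes> g \<otimes> x) (inv x \<otimes> h \<otimes> x)"
      using x gh by (simp add: s conj_grp_comm)
    then have "inv x \<otimes> s \<otimes> x = \<one> \<or> inv x \<otimes> s \<otimes> x = s"
      using kernel_comm_cases kernel_conj_closed x gh by metis
    moreover have "inv x \<otimes> s \<otimes> x \<noteq> \<one>"
      using x s_neq_one by (metis inv_closed inv_m_cancel_left l_inv m_assoc m_closed r_one s_closed)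
    ultimately have "inv x \<otimes> s \<otimes> x = s" by blast
    then show ?thesis using x by (metis m_assoc m_closed m_inv_cancel_left s_closed inv_closed)
  qed
  then show ?thesis unfolding grp_center_def by auto
qed

lemma s_commute: "x \<in> carrier G \<Longrightarrow> x \<otimes> s = s \<otimes> x"
  using grp_center_commute[OF s_center] .

lemma s_s_cancel: "x \<in> carrier G \<Longrightarrow> s \<otimes> (s \<otimes> x) = x"
  using s_square by (simp add: m_assoc [symmetric])

lemma s_mult_neq: "x \<in> carrier G \<Longrightarrow> s \<otimes> x \<noteq> x"
  using s_neq_one by simp

lemma s_left_commute: "x \<in> carrier G \<Longrightarrow> y \<in> carrier G \<Longrightarrow> x \<otimes> (s \<otimes> y) = s \<otimes> (x \<otimes> y)"
  by (simp add: m_assoc [symmetric] s_commute)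

lemma s_mult_s_mult: "x \<in> carrier G \<Longrightarrow> y \<in> carrier G \<Longrightarrow> (s \<otimes> x) \<otimes> (s \<otimes> y) = x \<otimes> y"
  using s_left_commute[of x y] by (simp add: m_assoc s_s_cancel)

lemma noncommuting_kernel: "m \<in> N \<Longrightarrow> n \<in> N \<Longrightarrow> m \<otimes> n \<noteq> n \<otimes> m \<Longrightarrow> m \<otimes> n = n \<otimes> m \<otimes> s"
  using kernel_comm_cases[of m n] grp_comm_eq_one_iff[of m n] commutator_mult[of m n] by auto

lemma center_if_commutes_with_kernel:
  assumes x: "x \<in> carrier G" and t: "t \<in> carrier G" "t \<notin> N" and xt: "x \<otimes> t = t \<otimes> x"
    and xN: "\<And>n. n \<in> N \<Longrightarrow> x \<otimes> n = n \<otimes> x"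
  shows "x \<in> Z"
proof -
  have "x \<otimes> g = g \<otimes> x" if g: "g \<in> carrier G" "g \<notin> N" for g
  proof -
    have "inv t \<otimes> g \<in> N"
      using t g not_in_kernel_iff[of t] not_in_kernel_iff[of g] by (simp add: kernel_iff sigma_mult sigma_inv)
    then have c: "x \<otimes> (inv t \<otimes> g) = (inv t \<otimes> g) \<otimes> x" by (rule xN)
    have "x \<otimes> g = x \<otimes> t \<otimes> (inv t \<otimes> g)" using x t g by (simp add: m_assoc)
    also have "\<dots> = t \<otimes> (x \<otimes> (inv t \<otimes> g))" using x t g xt by (simp add: m_assoc)
    also have "\<dots> = g \<otimes> x" using c x t g by (simp add: m_assoc)
    finally show ?thesis .
  qed
  then show ?thesis unfolding grp_center_def using x xN by auto
qed

text \<open>A central element z of N is fixed by *, so the pair alternatives for (z, t) and (z, tz),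
  with t \<notin> N, force z to commute with t* \<notin> N.\<close>

lemma kernel_center: "grp_center H = N \<inter> Z"
proof
  show "N \<inter> Z \<subseteq> grp_center H" unfolding grp_center_def by auto
  show "grp_center H \<subseteq> N \<inter> Z"
  proof
    fix z assume zH: "z \<in> grp_center H"
    then have zN: "z \<in> N" and zcomm: "\<And>n. n \<in> N \<Longrightarrow> z \<otimes> n = n \<otimes> z"
      unfolding grp_center_def by auto
    have zc: "z \<in> carrier G" using zN by simp
    have zs: "star z = z" using star_kernel_SLC[OF zN] zH by simp
    obtain t where t: "t \<in> carrier G" "\<sigma> t = -1" using orientation_nontrivial by blast
    have sz: "\<sigma> z = 1" using zN kernel_iff by auto
    have P1: "(z \<otimes> star t = t \<otimes> z \<and> z \<otimes> t = star t \<otimes> z) \<or> (z \<otimes> star t = star t \<otimes> z \<and> z \<otimes> t = t \<otimes> z)"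
      using opposite_sign[OF zc t(1)] sz t zs by auto
    define u where "u = t \<otimes> z"
    have uc: "u \<in> carrier G" using t zc u_def by simp
    have su: "\<sigma> u = -1" using t sz zc by (simp add: u_def sigma_mult)
    have stu: "star u = z \<otimes> star t" using t zc zs by (simp add: u_def star_mult)
    have P2: "(z \<otimes> (z \<otimes> star t) = u \<otimes> z \<and> z \<otimes> u = (z \<otimes> star t) \<otimes> z)
        \<or> (z \<otimes> (z \<otimes> star t) = (z \<otimes> star t) \<otimes> z \<and> z \<otimes> u = u \<otimes> z)"
      using opposite_sign[OF zc uc] sz su zs stu by auto
    have key: "z \<otimes> star t = star t \<otimes> z"
    proof (cases "z \<otimes> (z \<otimes> star t) = (z \<otimes> star t) \<otimes> z")
      case True
      then show ?thesis using zc t by (simp add: m_assoc)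
    next
      case False
      then have "z \<otimes> (t \<otimes> z) = z \<otimes> (star t \<otimes> z)" using P2 zc t by (simp add: u_def m_assoc)
      then have "t = star t" using zc t by simp
      then show ?thesis using P1 by auto
    qed
    have "star t \<notin> N" using t not_in_kernel_iff sigma_star by auto
    then have "z \<in> Z" using center_if_commutes_with_kernel[OF zc star_closed[OF t(1)] _ key zcomm] by auto
    with zN show "z \<in> N \<inter> Z" by blast
  qed
qed

lemma star_kernel: "n \<in> N \<Longrightarrow> star n = (if n \<in> Z then n else s \<otimes> n)"
  using star_kernel_SLC kernel_center by auto

lemma noncentral_kernel_pair:
  obtains m n where "m \<in> N" "n \<in> N" "m \<otimes> n = n \<otimes> m \<otimes> s" "m \<otimes> n \<noteq> n \<otimes> m"
    "star m = s \<otimes> m" "star n = s \<otimes> n"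
proof -
  have "non_abelian H" using SLC_kernel unfolding SLC_group_def LC_group_def by auto
  then obtain m n where mn: "m \<in> N" "n \<in> N" "m \<otimes> n \<noteq> n \<otimes> m"
    unfolding non_abelian_def by auto
  then have "m \<notin> Z" "n \<notin> Z" using not_in_grp_center[of m n] not_in_grp_center[of n m] by auto
  with mn show ?thesis
    using that[OF mn(1,2) noncommuting_kernel[OF mn]] star_kernel[OF mn(1)] star_kernel[OF mn(2)] by simp
qed

text \<open>Compare the pair alternatives for n and tm, where m, n \<in> N do not commute.\<close>

lemma star_odd_central:
  assumes t: "t \<in> carrier G" "t \<notin> N" "t \<in> Z"
  shows "star t = s \<otimes> t"
proof -
  obtain m n where mn: "m \<in> N" "n \<in> N" and mnr: "m \<otimes> n = n \<otimes> m \<otimes> s" and nc: "m \<otimes> n \<noteq> n \<otimes> m"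
    and sm: "star m = s \<otimes> m" and sn: "star n = s \<otimes> n"
    by (rule noncentral_kernel_pair)
  have mc: "m \<in> carrier G" and nc': "n \<in> carrier G" using mn by auto
  define t' where "t' = star t"
  have t'Z: "t' \<in> Z" unfolding t'_def using group_involution_center[OF involution t(3)] .
  have t'c: "t' \<in> carrier G" using t'Z by (rule grp_center_closed)
  define u where "u = t \<otimes> m"
  have uc: "u \<in> carrier G" using t mc u_def by simp
  have su: "\<sigma> u = -1" using t mn(1) not_in_kernel_iff[of t] kernel_iff by (simp add: u_def sigma_mult)
  have sgn: "\<sigma> n = 1" using mn kernel_iff by auto
  have stu: "star u = (s \<otimes> m) \<otimes> t'" using t mc sm by (simp add: u_def star_mult t'_def)
  have P: "(n \<otimes> star u = u \<otimes> star n \<and> star n \<otimes> u = star u \<otimes> n) \<or> (n \<otimes> star u = star u \<otimes> n \<and> star n \<otimes> u = u \<otimes> star n)"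
    using opposite_sign[OF nc' uc] sgn su by auto
  have L: "n \<otimes> star u = s \<otimes> (n \<otimes> m) \<otimes> t'"
    unfolding stu using mc nc' t'c by (simp add: m_assoc [symmetric] s_commute[OF nc'])
  show ?thesis
  proof (cases "n \<otimes> star u = star u \<otimes> n")
    case True
    have "star u \<otimes> n = s \<otimes> (m \<otimes> n) \<otimes> t'"
      unfolding stu using mc nc' t'c by (simp add: m_assoc grp_center_commute[OF t'Z nc'])
    then have "s \<otimes> (n \<otimes> m) \<otimes> t' = s \<otimes> (m \<otimes> n) \<otimes> t'" using True L by simp
    then have "n \<otimes> m = m \<otimes> n" using mc nc' t'c by simp
    then show ?thesis using nc by simp
  next
    case False
    then have E: "n \<otimes> star u = u \<otimes> star n" using P by auto
    have tnm: "t \<otimes> (n \<otimes> m) = (n \<otimes> m) \<otimes> t" using grp_center_commute[OF t(3), of "n \<otimes> m"] mc nc' by simp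
    have "u \<otimes> star n = s \<otimes> (t \<otimes> (m \<otimes> n))"
      unfolding sn u_def using mc nc' t by (simp add: m_assoc [symmetric] s_commute)
    also have "\<dots> = s \<otimes> ((n \<otimes> m) \<otimes> (t \<otimes> s))"
      unfolding mnr using mc nc' t by (simp add: m_assoc [symmetric] tnm)
    finally have "s \<otimes> (n \<otimes> m) \<otimes> t' = s \<otimes> ((n \<otimes> m) \<otimes> (t \<otimes> s))" using E L by simp
    then have "t' = t \<otimes> s" using mc nc' t t'c by (simp add: m_assoc)
    then show ?thesis using s_commute[OF t(1)] t'_def by simp
  qed
qed

text \<open>Compare the pair alternatives for t and tn, and for n and t, where n \<in> N does not
  commute with t.\<close>

lemma star_odd_noncentral:
  assumes t: "t \<in> carrier G" "t \<notin> N" "t \<notin> Z"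
  shows "star t = t"
proof -
  obtain n where n: "n \<in> N" "t \<otimes> n \<noteq> n \<otimes> t"
    using center_if_commutes_with_kernel[OF t(1) t(1) t(2) refl] t(3) by blast
  have nc: "n \<in> carrier G" using n by simp
  have "n \<notin> Z" using n(2) by (intro not_in_grp_center[OF nc t(1)]) simp
  then have sn: "star n = s \<otimes> n" using star_kernel[OF n(1)] by simp
  define t' where "t' = star t"
  have t'c: "t' \<in> carrier G" using t t'_def by simp
  have tt': "t \<otimes> t' = t' \<otimes> t" using star_commute t unfolding t'_def by auto
  define u where "u = t \<otimes> n"
  have uc: "u \<in> carrier G" using t nc u_def by simp
  have st: "\<sigma> t = -1" using t not_in_kernel_iff by auto
  have su: "\<sigma> u = -1" using t n(1) st kernel_iff by (simp add: u_def sigma_mult)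
  have sgn: "\<sigma> n = 1" using n kernel_iff by auto
  have tu: "t \<noteq> u"
  proof
    assume "t = u"
    then have "n = \<one>" using t nc unfolding u_def by (metis l_cancel_one')
    then show False using n t by simp
  qed
  have stu: "star u = (s \<otimes> n) \<otimes> t'" using t nc sn by (simp add: u_def star_mult t'_def)
  have P: "(t \<otimes> star u = t' \<otimes> u \<and> u \<otimes> t' = star u \<otimes> t) \<or> (t \<otimes> star u = star u \<otimes> t \<and> u \<otimes> t' = t' \<otimes> u)"
    using same_sign[OF t(1) uc tu] st su unfolding t'_def by auto
  have E1: "t \<otimes> star u = t' \<otimes> u"
  proof (rule ccontr)
    assume "t \<otimes> star u \<noteq> t' \<otimes> u"
    then have "t \<otimes> star u = star u \<otimes> t" using P by auto
    moreover have "t \<otimes> star u = s \<otimes> ((t \<otimes> n) \<otimes> t')"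
      unfolding stu using t nc t'c by (simp add: m_assoc [symmetric] s_commute[OF t(1)])
    moreover have "star u \<otimes> t = s \<otimes> ((n \<otimes> t) \<otimes> t')"
      unfolding stu using t nc t'c by (simp add: m_assoc tt')
    ultimately have "s \<otimes> ((t \<otimes> n) \<otimes> t') = s \<otimes> ((n \<otimes> t) \<otimes> t')" by simp
    then have "t \<otimes> n = n \<otimes> t" using t nc t'c by simp
    then show False using n by simp
  qed
  have Q: "(n \<otimes> t' = t \<otimes> star n \<and> star n \<otimes> t = t' \<otimes> n) \<or> (n \<otimes> t' = t' \<otimes> n \<and> star n \<otimes> t = t \<otimes> star n)"
    using opposite_sign[OF nc t(1)] sgn st unfolding t'_def by simp
  show ?thesis
  proof (cases "n \<otimes> t' = t' \<otimes> n")
    case True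
    have "t \<otimes> star u = s \<otimes> (t \<otimes> (n \<otimes> t'))"
      unfolding stu using t nc t'c by (simp add: m_assoc [symmetric] s_commute[OF t(1)])
    also have "\<dots> = s \<otimes> (t \<otimes> t' \<otimes> n)" using True t nc t'c by (simp add: m_assoc)
    also have "t \<otimes> t' \<otimes> n = t' \<otimes> u" unfolding u_def using t nc t'c by (simp add: m_assoc [symmetric] tt')
    finally have "s \<otimes> (t' \<otimes> u) = t' \<otimes> u" using E1 by simp
    with s_mult_neq[of "t' \<otimes> u"] t'c uc show ?thesis by blast
  next
    case False
    then have B: "n \<otimes> t' = t \<otimes> (s \<otimes> n)" using Q sn by auto
    have "t \<otimes> star u = t \<otimes> (s \<otimes> (n \<otimes> t'))"
      unfolding stu using t nc t'c by (simp add: m_assoc)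
    also have "\<dots> = t \<otimes> (s \<otimes> (s \<otimes> (t \<otimes> n)))"
      unfolding B using t nc by (simp add: m_assoc [symmetric] s_commute[OF t(1)])
    also have "\<dots> = t \<otimes> (t \<otimes> n)" using t nc by (simp add: s_s_cancel)
    finally have "t \<otimes> (t \<otimes> n) = t' \<otimes> (t \<otimes> n)" using E1 u_def by simp
    then show ?thesis using t nc t'c t'_def by simp
  qed
qed

lemma star_eq: "g \<in> carrier G \<Longrightarrow>
    star g = (if (g \<in> N \<and> g \<in> Z) \<or> (g \<notin> N \<and> g \<notin> Z) then g else s \<otimes> g)"
  using star_kernel star_odd_central star_odd_noncentral by auto

lemma commuting_product_central:
  assumes g: "g \<in> carrier G" and h: "h \<in> carrier G" and gh: "g \<otimes> h = h \<otimes> g"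
  shows "g \<in> Z \<or> h \<in> Z \<or> g \<otimes> h \<in> Z"
proof (rule ccontr)
  assume "\<not> (g \<in> Z \<or> h \<in> Z \<or> g \<otimes> h \<in> Z)"
  then have "star x = (if x \<in> N then s \<otimes> x else x)" if "x \<in> {g, h, g \<otimes> h}" for x
    using that g h star_eq by auto
  then have sg: "star g = (if g \<in> N then s \<otimes> g else g)"
    and sh: "star h = (if h \<in> N then s \<otimes> h else h)"
    and sgh: "star (g \<otimes> h) = (if g \<otimes> h \<in> N then s \<otimes> (g \<otimes> h) else g \<otimes> h)"
    by auto
  have star_gh: "star (g \<otimes> h) = star h \<otimes> star g" using g h by (rule star_mult)
  have "s \<otimes> (g \<otimes> h) = g \<otimes> h"
  proof (cases "g \<in> N"; cases "h \<in> N")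
    assume "g \<in> N" "h \<in> N"
    then have "s \<otimes> (g \<otimes> h) = (s \<otimes> h) \<otimes> (s \<otimes> g)"
      using star_gh kernel_mult_iff[OF g h] by (simp add: sg sh sgh)
    also have "\<dots> = g \<otimes> h" using g h gh by (simp add: s_mult_s_mult)
    finally show ?thesis .
  next
    assume "g \<in> N" "h \<notin> N"
    then have "g \<otimes> h = h \<otimes> (s \<otimes> g)"
      using star_gh kernel_mult_iff[OF g h] by (simp add: sg sh sgh)
    also have "\<dots> = s \<otimes> (g \<otimes> h)" using g h gh by (simp add: s_left_commute)
    finally show ?thesis by simp
  next
    assume "g \<notin> N" "h \<in> N"
    then have "g \<otimes> h = (s \<otimes> h) \<otimes> g"
      using star_gh kernel_mult_iff[OF g h] by (simp add: sg sh sgh)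
    also have "\<dots> = s \<otimes> (g \<otimes> h)" using g h gh by (simp add: m_assoc)
    finally show ?thesis by simp
  next
    assume "g \<notin> N" "h \<notin> N"
    then have "s \<otimes> (g \<otimes> h) = h \<otimes> g"
      using star_gh kernel_mult_iff[OF g h] by (simp add: sg sh sgh)
    then show ?thesis using gh by simp
  qed
  then show False using s_mult_neq g h by simp
qed

lemma LC_group_if_non_abelian: "non_abelian G \<Longrightarrow> LC_group G"
  unfolding LC_group_def
proof (intro conjI ballI iffI)
  fix g h assume g: "g \<in> carrier G" and h: "h \<in> carrier G"
  show "g \<otimes> h = h \<otimes> g \<Longrightarrow> g \<in> Z \<or> h \<in> Z \<or> g \<otimes> h \<in> Z"
    using commuting_product_central[OF g h] .
  assume "g \<in> Z \<or> h \<in> Z \<or> g \<otimes> h \<in> Z"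
  then show "g \<otimes> h = h \<otimes> g"
  proof (elim disjE)
    assume "g \<otimes> h \<in> Z"
    then have "g \<otimes> (g \<otimes> h) = g \<otimes> (h \<otimes> g)"
      using g h grp_center_commute[of "g \<otimes> h" g] by (simp add: m_assoc)
    then show ?thesis using g h by simp
  qed (use g h grp_center_commute in auto)
qed

end

lemma orientation_star:
  assumes "group_involution G star" and "orientation G \<sigma>"
    and "\<forall>g\<in>carrier G. g \<otimes>\<^bsub>G\<^esub> star g \<in> orient_kernel G \<sigma>" and g: "g \<in> carrier G"
  shows "\<sigma> (star g) = \<sigma> g"
proof -
  have "star g \<in> carrier G" using assms(1) g unfolding group_involution_def by auto
  then have "\<sigma> g * \<sigma> (star g) = 1" "\<sigma> g = 1 \<or> \<sigma> g = -1" "\<sigma> (star g) = 1 \<or> \<sigma> (star g) = -1"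
    using assms(2,3) g unfolding orientation_def orient_kernel_def by force+
  then show ?thesis by auto
qed

theorem proposition1:
  fixes G :: "('g, 'b) monoid_scheme"
    and star :: "'g \<Rightarrow> 'g" and \<sigma> :: "'g \<Rightarrow> int" and s :: 'g
  assumes "infinite (UNIV :: 'f::field set)"
    and "(2::'f) \<noteq> 0"
    and "group G"
    and "non_abelian G"
    and "group_involution G star"
    and "orientation G \<sigma>"
    and "\<exists>g\<in>carrier G. \<sigma> g = -1"
    and "\<forall>g\<in>carrier G. g \<otimes>\<^bsub>G\<^esub> star g \<in> orient_kernel G \<sigma>"
    and "grp_alg_normal TYPE('f) G \<sigma> star"
    and "SLC_group (G\<lparr>carrier := orient_kernel G \<sigma>\<rparr>) star s"
  shows "LC_group G \<and>
    (\<forall>g\<in>carrier G. star g =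
       (if (g \<in> orient_kernel G \<sigma> \<and> g \<in> grp_center G) \<or>
           (g \<notin> orient_kernel G \<sigma> \<and> g \<notin> grp_center G)
        then g else s \<otimes>\<^bsub>G\<^esub> g))"
proof -
  interpret group G by fact
  interpret normal_SLC_kernel G star \<sigma> s
    using assms orientation_star[OF assms(5,6,8)] grp_alg_normal_star_commute[OF assms(5,6,9)]
      grp_alg_normal_same_sign[OF assms(5,6,9,2)] grp_alg_normal_opposite_sign[OF assms(5,6,9,2)]
    by unfold_locales auto
  show ?thesis using LC_group_if_non_abelian[OF assms(4)] star_eq by blast
qed

end
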